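(* Consider the unweighted tree augmentation problem where the edges $E$ of the base tree and the links $L$ arrive as a single stream in an arbitrary order. For any constant integer $t\ge 1$, any (randomized) streaming algorithm that outputs the size of a better-than-$(2t+1)$-approximate solution requires $\Omega(\gamma(n,2t+1))$ bits of space, where $\gamma(n,2t+1)$ denotes the maximum possible number of edges in an $n$-vertex graph with girth greater than $2t+1$.
   Context: Unweighted tree augmentation problem: given a spanning tree with edge set $E$ on an $n$-vertex set $V$ and a set of links $L\subseteq\binom{V}{2}$, find a minimum-cardinality $S\subseteq L$ such that $(V,E\cup S)$ is $2$-edge-connected. The randomized algorithm is required to succeed with bounded error (constant probability). *)

theory Defs
  imports "HOL-Probability.Probability"
begin

text \<open>Vertices are the naturals below n. A stream item is either an edge of the
base tree or a link; each carries its (2-element) set of endpoints.\<close>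

datatype item = TreeE "nat set" | LinkE "nat set"

fun ends :: "item \<Rightarrow> nat set" where
  "ends (TreeE e) = e"
| "ends (LinkE e) = e"

definition vpairs :: "nat \<Rightarrow> nat set set" where
  "vpairs n = {e. \<exists>u v. u < n \<and> v < n \<and> u \<noteq> v \<and> e = {u, v}}"

text \<open>Multigraph whose edges are the items in I (parallel tree edge / link are distinct).\<close>
definition adj :: "item set \<Rightarrow> (nat \<times> nat) set" where
  "adj I = {(u, v). \<exists>x\<in>I. ends x = {u, v}}"

definition connected_on :: "nat set \<Rightarrow> item set \<Rightarrow> bool" where
  "connected_on V I \<longleftrightarrow> (\<forall>u\<in>V. \<forall>v\<in>V. (u, v) \<in> (adj I)\<^sup>*)"

definition two_edge_connected :: "nat set \<Rightarrow> item set \<Rightarrow> bool" where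
  "two_edge_connected V I \<longleftrightarrow> connected_on V I \<and> (\<forall>x\<in>I. connected_on V (I - {x}))"

definition spanning_tree :: "nat \<Rightarrow> nat set set \<Rightarrow> bool" where
  "spanning_tree n E \<longleftrightarrow> E \<subseteq> vpairs n \<and> connected_on {..<n} (TreeE ` E) \<and> card E = n - 1"

definition tap_instance :: "nat \<Rightarrow> nat set set \<Rightarrow> nat set set \<Rightarrow> bool" where
  "tap_instance n E L \<longleftrightarrow> spanning_tree n E \<and> L \<subseteq> vpairs n"

definition tap_feasible :: "nat \<Rightarrow> nat set set \<Rightarrow> nat set set \<Rightarrow> nat set set \<Rightarrow> bool" where
  "tap_feasible n E L S \<longleftrightarrow> S \<subseteq> L \<and> two_edge_connected {..<n} (TreeE ` E \<union> LinkE ` S)"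

definition tap_opt :: "nat \<Rightarrow> nat set set \<Rightarrow> nat set set \<Rightarrow> nat" where
  "tap_opt n E L = Min {card S | S. tap_feasible n E L S}"

definition is_stream :: "nat set set \<Rightarrow> nat set set \<Rightarrow> item list \<Rightarrow> bool" where
  "is_stream E L xs \<longleftrightarrow> distinct xs \<and> set xs = TreeE ` E \<union> LinkE ` L"

text \<open>A deterministic streaming algorithm: initial memory state, transition on each
stream item, and output function. A randomized algorithm is a probability distribution over
deterministic ones (random bits are free, which only strengthens a lower bound).\<close>
type_synonym stream_alg = "nat \<times> (item \<Rightarrow> nat \<Rightarrow> nat) \<times> (nat \<Rightarrow> nat)"

definition space_bounded :: "nat \<Rightarrow> stream_alg \<Rightarrow> bool" where
  "space_bounded s A \<longleftrightarrow> (case A of (q0, step, out) \<Rightarrow>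
      q0 < 2 ^ s \<and> (\<forall>x q. q < 2 ^ s \<longrightarrow> step x q < 2 ^ s))"

definition run_alg :: "stream_alg \<Rightarrow> item list \<Rightarrow> nat" where
  "run_alg A xs = (case A of (q0, step, out) \<Rightarrow> out (fold step xs q0))"

definition has_cycle_of_length :: "nat set set \<Rightarrow> nat \<Rightarrow> bool" where
  "has_cycle_of_length F k \<longleftrightarrow> k \<ge> 3 \<and> (\<exists>vs. length vs = k \<and> distinct vs \<and>
      (\<forall>i<k. {vs ! i, vs ! ((i + 1) mod k)} \<in> F))"

definition girth_gt :: "nat set set \<Rightarrow> nat \<Rightarrow> bool" where
  "girth_gt F g \<longleftrightarrow> (\<forall>k. k \<le> g \<longrightarrow> \<not> has_cycle_of_length F k)"

definition gamma :: "nat \<Rightarrow> nat \<Rightarrow> nat" where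
  "gamma n g = Max {card F | F. F \<subseteq> vpairs n \<and> girth_gt F g}"

end

(*
  A streaming algorithm for tree augmentation yields a one-way protocol for INDEX. Let H be a
  graph of girth greater than K = 2t+1 with a spanning tree T, and M = H - T. Alice holds
  F \<subseteq> M and streams the links F \<union> T; Bob holds e = {u, v} \<in> M and streams, as the tree, a
  Hamiltonian path from u to v that visits the vertices by increasing distance from u in H - e,
  capped at K. If e \<in> F, the link e alone makes the path 2-edge-connected. Otherwise no link
  changes this level by more than one, while u and v are K levels apart by the girth condition,
  so at least K links are needed. A better than K-approximation therefore decides e \<in> F, and
  INDEX on M needs \<Omega>(|M|) bits. An extremal H gives |M| \<ge> \<gamma>(n, K) - n; when \<gamma>(n, K) < 2n,
  a path with chords of length K gives |M| \<approx> n/K instead.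
*)

theory Submission
  imports Defs "HOL-Library.Transitive_Closure_Table"
begin

section \<open>Connectivity\<close>

lemma adj_sym: "(x, y) \<in> adj I \<Longrightarrow> (y, x) \<in> adj I"
  unfolding adj_def by (auto simp: insert_commute)

lemma rtrancl_adj_sym: "(x, y) \<in> (adj I)\<^sup>* \<Longrightarrow> (y, x) \<in> (adj I)\<^sup>*"
  by (induction rule: rtrancl_induct) (auto intro: converse_rtrancl_into_rtrancl adj_sym)

lemma adj_mono: "I \<subseteq> J \<Longrightarrow> adj I \<subseteq> adj J"
  unfolding adj_def by auto

lemma connected_on_mono: "connected_on V I \<Longrightarrow> I \<subseteq> J \<Longrightarrow> connected_on V J"
  unfolding connected_on_def using rtrancl_mono[OF adj_mono] by blast

lemma connected_onI_root:
  assumes "\<And>x. x \<in> V \<Longrightarrow> (r, x) \<in> (adj I)\<^sup>*"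
  shows "connected_on V I"
  unfolding connected_on_def by (meson assms rtrancl_trans rtrancl_adj_sym)

lemma rtrancl_adj_crosses_cut:
  assumes "(a, b) \<in> (adj I)\<^sup>*" "a \<in> C" "b \<notin> C"
  obtains x p q where "x \<in> I" "ends x = {p, q}" "p \<in> C" "q \<notin> C"
  using assms
proof (induction arbitrary: thesis rule: rtrancl_induct)
  case (step y z)
  then show ?case
    by (cases "y \<in> C") (auto simp: adj_def)
qed simp

lemma two_edge_connectedI_tree_links:
  assumes "connected_on V (TreeE ` E)" "connected_on V (LinkE ` T)" "T \<subseteq> L"
  shows "two_edge_connected V (TreeE ` E \<union> LinkE ` L)"
  unfolding two_edge_connected_def
proof (intro conjI ballI)
  show "connected_on V (TreeE ` E \<union> LinkE ` L)"
    using assms(1) connected_on_mono by blast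
  fix x assume "x \<in> TreeE ` E \<union> LinkE ` L"
  show "connected_on V (TreeE ` E \<union> LinkE ` L - {x})"
  proof (cases x)
    case (TreeE e)
    then have "LinkE ` T \<subseteq> TreeE ` E \<union> LinkE ` L - {x}"
      using assms(3) by auto
    then show ?thesis by (rule connected_on_mono[OF assms(2)])
  next
    case (LinkE e)
    then have "TreeE ` E \<subseteq> TreeE ` E \<union> LinkE ` L - {x}"
      by auto
    then show ?thesis by (rule connected_on_mono[OF assms(1)])
  qed
qed

definition adjacent :: "'a set set \<Rightarrow> 'a \<Rightarrow> 'a \<Rightarrow> bool" where
  "adjacent H x y \<longleftrightarrow> {x, y} \<in> H"

lemma adjacent_sym: "adjacent H x y \<Longrightarrow> adjacent H y x"
  unfolding adjacent_def by (simp add: insert_commute)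

lemma rtranclp_adjacent_sym: "(adjacent H)\<^sup>*\<^sup>* x y \<Longrightarrow> (adjacent H)\<^sup>*\<^sup>* y x"
proof (induction rule: rtranclp_induct)
  case (step y z)
  then show ?case by (meson adjacent_sym converse_rtranclp_into_rtranclp)
qed simp

lemma rtranclp_adjacent_imp_adj:
  "(adjacent T)\<^sup>*\<^sup>* x y \<Longrightarrow> (x, y) \<in> (adj (LinkE ` T))\<^sup>*"
proof (induction rule: rtranclp_induct)
  case (step y z)
  have "(y, z) \<in> adj (LinkE ` T)"
    using step(2) unfolding adjacent_def adj_def by force
  then show ?case using step(3) by simp
qed simp

lemma finite_vpairs: "finite (vpairs n)"
  by (rule finite_subset[of _ "Pow {..<n}"]) (auto simp: vpairs_def)

lemma vpairs_Min_Max: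
  assumes "e \<in> vpairs n"
  shows "e = {Min e, Max e}" "Min e < Max e" "Max e < n"
proof -
  obtain a b where "a < n" "b < n" "a \<noteq> b" "e = {a, b}"
    using assms unfolding vpairs_def by blast
  then show "e = {Min e, Max e}" "Min e < Max e" "Max e < n"
    by (auto simp: min_def max_def)
qed

lemma finite_tap_opt_candidates:
  assumes "finite L"
  shows "finite {card S | S. tap_feasible n E L S}"
proof (rule finite_subset)
  show "{card S | S. tap_feasible n E L S} \<subseteq> card ` Pow L"
    unfolding tap_feasible_def by blast
qed (use assms in simp)

lemma tap_opt_le:
  assumes "finite L" "tap_feasible n E L S"
  shows "tap_opt n E L \<le> card S"
  unfolding tap_opt_def
  by (rule Min_le) (use assms finite_tap_opt_candidates in blast)+

lemma tap_opt_geI: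
  assumes "finite L" "tap_feasible n E L L" "\<And>S. tap_feasible n E L S \<Longrightarrow> k \<le> card S"
  shows "k \<le> tap_opt n E L"
  unfolding tap_opt_def
  by (rule Min.boundedI) (use assms finite_tap_opt_candidates in blast)+

section \<open>Hamiltonian paths as spanning trees\<close>

definition path_edges :: "nat list \<Rightarrow> nat set set" where
  "path_edges ys = (\<lambda>i. {ys ! i, ys ! Suc i}) ` {..<length ys - 1}"

locale vertex_enum =
  fixes n :: nat and ys :: "nat list"
  assumes distinct_ys: "distinct ys" and set_ys: "set ys = {..<n}" and two_le_n: "2 \<le> n"
begin

lemma length_ys: "length ys = n"
  using distinct_card[OF distinct_ys] set_ys by simp

lemma nth_less: "i < n \<Longrightarrow> ys ! i < n"
  using set_ys length_ys nth_mem by blast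

lemma ex_nth_eq: "x < n \<Longrightarrow> \<exists>i<n. ys ! i = x"
  using set_ys length_ys by (metis in_set_conv_nth lessThan_iff)

lemma nth_eq_iff: "i < n \<Longrightarrow> j < n \<Longrightarrow> ys ! i = ys ! j \<longleftrightarrow> i = j"
  using distinct_ys length_ys nth_eq_iff_index_eq by blast

lemma nth_doubleton_eq:
  assumes "a < n" "b < n" "k < n" "l < n" "{ys ! k, ys ! l} = {ys ! a, ys ! b}"
  shows "k = a \<and> l = b \<or> k = b \<and> l = a"
  using assms nth_eq_iff by (auto simp: doubleton_eq_iff)

lemma path_edge_mem: "i < n - 1 \<Longrightarrow> {ys ! i, ys ! Suc i} \<in> path_edges ys"
  unfolding path_edges_def using length_ys by auto

lemma path_edgeE:
  assumes "f \<in> path_edges ys"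
  obtains i where "i < n - 1" "f = {ys ! i, ys ! Suc i}"
  using assms length_ys unfolding path_edges_def by auto

lemma path_edge_inj:
  assumes "i < n - 1" "j < n - 1" "{ys ! i, ys ! Suc i} = {ys ! j, ys ! Suc j}"
  shows "i = j"
proof -
  have "Suc i < n" "Suc j < n"
    using assms(1,2) by auto
  then show ?thesis
    using nth_doubleton_eq[of j "Suc j" i "Suc i"] assms(3) by auto
qed

lemma rtrancl_adj_along_path:
  assumes "\<And>k. a \<le> k \<Longrightarrow> k < b \<Longrightarrow> TreeE {ys ! k, ys ! Suc k} \<in> J" "a \<le> b"
  shows "(ys ! a, ys ! b) \<in> (adj J)\<^sup>*"
  using assms
proof (induction b)
  case (Suc b)
  show ?case
  proof (cases "a = Suc b")
    case False
    then have "(ys ! a, ys ! b) \<in> (adj J)\<^sup>*"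
      using Suc by simp
    moreover have "(ys ! b, ys ! Suc b) \<in> adj J"
      using Suc(2)[of b] Suc(3) False unfolding adj_def by force
    ultimately show ?thesis by simp
  qed simp
qed simp

lemma connected_path_edges: "connected_on {..<n} (TreeE ` path_edges ys)"
proof (rule connected_onI_root)
  fix x assume "x \<in> {..<n}"
  then obtain a where "a < n" "ys ! a = x"
    using ex_nth_eq by blast
  moreover have "(ys ! 0, ys ! a) \<in> (adj (TreeE ` path_edges ys))\<^sup>*" if "a < n"
    by (rule rtrancl_adj_along_path) (use that path_edge_mem in auto)
  ultimately show "(ys ! 0, x) \<in> (adj (TreeE ` path_edges ys))\<^sup>*"
    by blast
qed

lemma path_edges_subset_vpairs: "path_edges ys \<subseteq> vpairs n"
proof
  fix f assume "f \<in> path_edges ys"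
  then obtain i where "i < n - 1" "f = {ys ! i, ys ! Suc i}"
    by (rule path_edgeE)
  moreover from this have "ys ! i \<noteq> ys ! Suc i" "ys ! i < n" "ys ! Suc i < n"
    using nth_eq_iff nth_less by auto
  ultimately show "f \<in> vpairs n"
    unfolding vpairs_def by blast
qed

lemma card_path_edges: "card (path_edges ys) = n - 1"
proof -
  have "inj_on (\<lambda>i. {ys ! i, ys ! Suc i}) {..<n - 1}"
    by (rule inj_onI) (use path_edge_inj in auto)
  then show ?thesis
    unfolding path_edges_def using length_ys by (simp add: card_image)
qed

lemma spanning_tree_path_edges: "spanning_tree n (path_edges ys)"
  unfolding spanning_tree_def
  using path_edges_subset_vpairs connected_path_edges card_path_edges by blast

text \<open>Going around the cycle formed by the path and the link from its last to its first vertex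
  avoids any one tree edge.\<close>
lemma connected_path_closing_link_minus_edge:
  assumes i: "i < n - 1"
    and tree: "\<And>k. k < n - 1 \<Longrightarrow> k \<noteq> i \<Longrightarrow> TreeE {ys ! k, ys ! Suc k} \<in> J"
    and link: "LinkE {ys ! 0, ys ! (n - 1)} \<in> J"
  shows "connected_on {..<n} J"
proof (rule connected_onI_root)
  fix y assume "y \<in> {..<n}"
  then obtain a where a: "a < n" "ys ! a = y"
    using ex_nth_eq by blast
  show "(ys ! 0, y) \<in> (adj J)\<^sup>*"
  proof (cases "a \<le> i")
    case True
    show ?thesis
      unfolding a(2)[symmetric] by (rule rtrancl_adj_along_path) (use True i tree in auto)
  next
    case False
    have "(ys ! a, ys ! (n - 1)) \<in> (adj J)\<^sup>*"
      by (rule rtrancl_adj_along_path) (use False a tree in auto)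
    moreover have "(ys ! (n - 1), ys ! 0) \<in> adj J"
      using link unfolding adj_def by (force simp: insert_commute)
    ultimately have "(ys ! a, ys ! 0) \<in> (adj J)\<^sup>*"
      by (rule rtrancl_into_rtrancl)
    then show ?thesis
      unfolding a(2)[symmetric] by (rule rtrancl_adj_sym)
  qed
qed

lemma two_edge_connected_closing_link:
  "two_edge_connected {..<n} (TreeE ` path_edges ys \<union> {LinkE {ys ! 0, ys ! (n - 1)}})"
  unfolding two_edge_connected_def
proof (intro conjI ballI)
  show "connected_on {..<n} (TreeE ` path_edges ys \<union> {LinkE {ys ! 0, ys ! (n - 1)}})"
    using connected_path_edges connected_on_mono by blast
  fix x assume x: "x \<in> TreeE ` path_edges ys \<union> {LinkE {ys ! 0, ys ! (n - 1)}}"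
  define J where "J = TreeE ` path_edges ys \<union> {LinkE {ys ! 0, ys ! (n - 1)}} - {x}"
  show "connected_on {..<n} J"
  proof (cases x)
    case (LinkE e)
    then have "TreeE ` path_edges ys \<subseteq> J"
      unfolding J_def by auto
    then show ?thesis by (rule connected_on_mono[OF connected_path_edges])
  next
    case (TreeE e)
    then obtain i where i: "i < n - 1" "x = TreeE {ys ! i, ys ! Suc i}"
      using x by (auto elim: path_edgeE)
    show ?thesis
    proof (rule connected_path_closing_link_minus_edge[OF i(1)])
      show "TreeE {ys ! k, ys ! Suc k} \<in> J" if "k < n - 1" "k \<noteq> i" for k
        using that path_edge_mem path_edge_inj[OF that(1) i(1)] i unfolding J_def by auto
      show "LinkE {ys ! 0, ys ! (n - 1)} \<in> J"
        using i unfolding J_def by auto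
    qed
  qed
qed

lemma connected_crosses_position:
  assumes J: "connected_on {..<n} J" "\<And>y. y \<in> J \<Longrightarrow> ends y \<in> vpairs n" and i: "i < n - 1"
  obtains y a b where "y \<in> J" "ends y = {ys ! a, ys ! b}" "a \<le> i" "i < b" "b < n"
proof -
  define C where "C = (!) ys ` {..i}"
  have "(ys ! 0, ys ! (n - 1)) \<in> (adj J)\<^sup>*"
    using J(1) unfolding connected_on_def using nth_less two_le_n by auto
  moreover have "ys ! 0 \<in> C"
    unfolding C_def by auto
  moreover have "ys ! (n - 1) \<notin> C"
  proof
    assume "ys ! (n - 1) \<in> C"
    then obtain a where "a \<le> i" "ys ! a = ys ! (n - 1)"
      unfolding C_def by auto
    then show False
      using nth_eq_iff[of a "n - 1"] i by auto
  qed
  ultimately obtain y p q where y: "y \<in> J" "ends y = {p, q}" "p \<in> C" "q \<notin> C"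
    by (rule rtrancl_adj_crosses_cut)
  obtain a where a: "a \<le> i" "p = ys ! a"
    using y(3) unfolding C_def by auto
  have "q < n"
    using J(2)[OF y(1)] y(2) unfolding vpairs_def by (auto simp: doubleton_eq_iff)
  then obtain b where b: "b < n" "q = ys ! b"
    using ex_nth_eq by blast
  have "i < b"
    using y(4) b unfolding C_def by (metis atMost_iff image_eqI not_less)
  then show ?thesis
    using that y(1,2) a b by blast
qed

text \<open>After deleting the tree edge between positions i and i+1, the remaining tree edges
  cannot cross this position, so a link has to.\<close>
lemma link_crosses_path_edge:
  assumes tec: "two_edge_connected {..<n} (TreeE ` path_edges ys \<union> LinkE ` S)"
    and S: "S \<subseteq> vpairs n" and i: "i < n - 1"
  obtains a b where "{ys ! a, ys ! b} \<in> S" "a \<le> i" "i < b" "b < n"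
proof -
  define x where "x = TreeE {ys ! i, ys ! Suc i}"
  define J where "J = TreeE ` path_edges ys \<union> LinkE ` S - {x}"
  have "x \<in> TreeE ` path_edges ys \<union> LinkE ` S"
    using path_edge_mem i unfolding x_def by auto
  then have "connected_on {..<n} J"
    using tec unfolding two_edge_connected_def J_def by blast
  moreover have "ends y \<in> vpairs n" if "y \<in> J" for y
    using that S path_edges_subset_vpairs unfolding J_def by auto
  ultimately obtain y a b where y: "y \<in> J" "ends y = {ys ! a, ys ! b}" "a \<le> i" "i < b" "b < n"
    using i by (rule connected_crosses_position)
  show ?thesis
  proof (cases y)
    case (TreeE f)
    then have "f \<in> path_edges ys" "y \<noteq> x"
      using y(1) unfolding J_def by auto
    then obtain k where k: "k < n - 1" "f = {ys ! k, ys ! Suc k}"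
      by (auto elim: path_edgeE)
    then have "k = a \<and> Suc k = b \<or> k = b \<and> Suc k = a"
      using nth_doubleton_eq[of a b k "Suc k"] y i TreeE by auto
    then have "k = i"
      using y(3,4) by auto
    then show ?thesis
      using \<open>y \<noteq> x\<close> TreeE k x_def by simp
  next
    case (LinkE f)
    then have "{ys ! a, ys ! b} \<in> S"
      using y(1,2) unfolding J_def by auto
    then show ?thesis
      using that y(3-5) by blast
  qed
qed

text \<open>A link jumping over the tree edge in front of the first vertex of level above j joins a
  vertex of level at most j to one of level above j, hence of levels exactly j and j+1.\<close>
lemma link_between_levels:
  assumes tec: "two_edge_connected {..<n} (TreeE ` path_edges ys \<union> LinkE ` S)"
    and S: "S \<subseteq> vpairs n" and sorted: "sorted (map lev ys)"
    and first: "lev (ys ! 0) = 0" and last: "j < lev (ys ! (n - 1))"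
    and step: "\<And>x y. {x, y} \<in> S \<Longrightarrow> lev x \<le> Suc (lev y)"
  obtains x y where "{x, y} \<in> S" "lev x = j" "lev y = Suc j"
proof -
  have mono: "lev (ys ! a) \<le> lev (ys ! b)" if "a \<le> b" "b < n" for a b
    using sorted that length_ys unfolding sorted_iff_nth_mono by auto
  define p where "p = (LEAST p. j < lev (ys ! p))"
  have p: "j < lev (ys ! p)" "p \<le> n - 1"
    using last unfolding p_def by (auto intro: LeastI Least_le)
  then have "p \<noteq> 0"
    using first by (metis not_less0)
  then have "\<not> j < lev (ys ! (p - 1))"
    unfolding p_def by (intro not_less_Least) simp
  then have "lev (ys ! (p - 1)) \<le> j"
    by simp
  moreover have "p - 1 < n - 1"
    using p(2) \<open>p \<noteq> 0\<close> by linarith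
  then obtain a b where ab: "{ys ! a, ys ! b} \<in> S" "a \<le> p - 1" "p - 1 < b" "b < n"
    by (rule link_crosses_path_edge[OF tec S])
  moreover have "p \<le> b"
    using ab(3) by linarith
  ultimately have "lev (ys ! a) \<le> j" "j < lev (ys ! b)"
    using mono[of a "p - 1"] mono[of p b] p(1) by auto
  moreover have "lev (ys ! b) \<le> Suc (lev (ys ! a))"
    using step[of "ys ! b" "ys ! a"] ab(1) by (simp add: insert_commute)
  ultimately have "lev (ys ! a) = j" "lev (ys ! b) = Suc j"
    by auto
  then show ?thesis
    using that ab(1) by blast
qed

lemma card_links_ge_level_gap:
  assumes tec: "two_edge_connected {..<n} (TreeE ` path_edges ys \<union> LinkE ` S)"
    and S: "S \<subseteq> vpairs n" "finite S"
    and sorted: "sorted (map lev ys)"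
    and first: "lev (ys ! 0) = 0" and last: "K \<le> lev (ys ! (n - 1))"
    and step: "\<And>x y. {x, y} \<in> S \<Longrightarrow> lev x \<le> Suc (lev y)"
  shows "K \<le> card S"
proof -
  have "card {..<K} \<le> card S"
  proof (rule card_le_if_inj_on_rel[OF S(2)])
    fix j assume "j \<in> {..<K}"
    then have "j < lev (ys ! (n - 1))"
      using last by simp
    then obtain x y where "{x, y} \<in> S" "lev x = j" "lev y = Suc j"
      by (rule link_between_levels[OF tec S(1) sorted first _ step])
    then show "\<exists>f. f \<in> S \<and> (\<exists>x y. f = {x, y} \<and> lev x = j \<and> lev y = Suc j)"
      by blast
  next
    fix j j' f
    assume "\<exists>x y. f = {x, y} \<and> lev x = j \<and> lev y = Suc j"
      and "\<exists>x y. f = {x, y} \<and> lev x = j' \<and> lev y = Suc j'"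
    then show "j = j'"
      by (auto simp: doubleton_eq_iff)
  qed
  then show ?thesis by simp
qed

end

section \<open>The INDEX problem\<close>

lemma exists_outcome_good_on_two_thirds:
  fixes P :: "'a pmf" and Q :: "'a \<Rightarrow> 'b \<Rightarrow> bool"
  assumes X: "finite X" and prob: "\<And>x. x \<in> X \<Longrightarrow> 2 / 3 \<le> measure_pmf.prob P {A. Q A x}"
  shows "\<exists>A\<in>set_pmf P. 2 * card X \<le> 3 * card {x\<in>X. Q A x}"
proof (rule ccontr)
  assume "\<not> ?thesis"
  then have few: "3 * real (card {x\<in>X. Q A x}) \<le> 2 * real (card X) - 1" if "A \<in> set_pmf P" for A
    using that by fastforce
  define count where "count A = (\<Sum>x\<in>X. indicator {A. Q A x} A :: real)" for A
  have count_eq: "count A = real (card {x\<in>X. Q A x})" for A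
    unfolding count_def indicator_def using X by (simp add: sum.If_cases Int_def)
  have integrable: "integrable (measure_pmf P) (\<lambda>A. indicator {A. Q A x} A :: real)" for x
    by (rule measure_pmf.integrable_const_bound[where B = 1]) (auto simp: indicator_def)
  have "2 / 3 * real (card X) \<le> (\<Sum>x\<in>X. measure_pmf.prob P {A. Q A x})"
    using sum_mono[of X "\<lambda>_. 2 / 3" "\<lambda>x. measure_pmf.prob P {A. Q A x}"] prob by simp
  also have "\<dots> = measure_pmf.expectation P count"
    unfolding count_def using integrable by (simp add: Bochner_Integration.integral_sum)
  also have "\<dots> \<le> (2 * real (card X) - 1) / 3"
  proof (rule measure_pmf.integral_le_const)
    show "integrable (measure_pmf P) count"
      unfolding count_def using integrable by simp
    show "AE A in measure_pmf P. count A \<le> (2 * real (card X) - 1) / 3"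
      unfolding AE_measure_pmf_iff count_eq using few by (auto simp: field_simps)
  qed
  finally show False by simp
qed

lemma sum_binomial_times_power_two_le:
  assumes "r \<le> m"
  shows "(\<Sum>k\<le>r. m choose k) * 2 ^ (m - r) \<le> (3::nat) ^ m"
proof -
  have "(\<Sum>k\<le>r. m choose k) * 2 ^ (m - r) \<le> (\<Sum>k\<le>r. (m choose k) * 2 ^ (m - k))"
    unfolding sum_distrib_right by (intro sum_mono mult_left_mono power_increasing) auto
  also have "\<dots> \<le> (\<Sum>k\<le>m. (m choose k) * 2 ^ (m - k))"
    by (rule sum_mono2) (use assms in auto)
  also have "\<dots> = (1 + 2) ^ m"
    by (subst binomial_ring) simp
  finally show ?thesis
    by (simp add: numeral_3_eq_3)
qed

lemma card_subsets_card_le: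
  assumes "finite M"
  shows "card {D. D \<subseteq> M \<and> card D \<le> r} \<le> (\<Sum>k\<le>r. card M choose k)"
proof -
  have "{D. D \<subseteq> M \<and> card D \<le> r} = (\<Union>k\<le>r. {D. D \<subseteq> M \<and> card D = k})"
    by auto
  then have "card {D. D \<subseteq> M \<and> card D \<le> r} \<le> (\<Sum>k\<le>r. card {D. D \<subseteq> M \<and> card D = k})"
    by (simp add: card_UN_le)
  then show ?thesis
    using n_subsets[OF assms] by simp
qed

lemma card_ge_times_le_sum:
  fixes f :: "'a \<Rightarrow> nat"
  assumes "finite A"
  shows "card {a\<in>A. c \<le> f a} * c \<le> (\<Sum>a\<in>A. f a)"
proof -
  have "card {a\<in>A. c \<le> f a} * c = (\<Sum>a\<in>{a\<in>A. c \<le> f a}. c)"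
    by simp
  also have "\<dots> \<le> (\<Sum>a\<in>{a\<in>A. c \<le> f a}. f a)"
    by (rule sum_mono) simp
  also have "\<dots> \<le> (\<Sum>a\<in>A. f a)"
    by (rule sum_mono2) (use assms in auto)
  finally show ?thesis .
qed

lemma markov_card_bound:
  fixes f :: "'a \<Rightarrow> nat"
  assumes A: "finite A" and mean: "3 * (\<Sum>a\<in>A. f a) \<le> card A * m"
  shows "card A \<le> 9 * card {a\<in>A. f a \<le> 3 * m div 8}"
proof -
  define r where "r = 3 * m div 8"
  define bad where "bad = card {a\<in>A. Suc r \<le> f a}"
  have "bad * Suc r \<le> (\<Sum>a\<in>A. f a)"
    unfolding bad_def using A by (rule card_ge_times_le_sum)
  moreover have "3 * m \<le> 8 * Suc r"
    unfolding r_def by presburger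
  then have "card A * (3 * m) \<le> card A * (8 * Suc r)"
    by (rule mult_le_mono2)
  ultimately have "9 * bad * Suc r \<le> 8 * card A * Suc r"
    using mean by linarith
  then have "9 * bad \<le> 8 * card A"
    by (metis mult_le_cancel2 zero_less_Suc)
  moreover have "card {a\<in>A. f a \<le> r} + bad = card A"
  proof -
    have "{a\<in>A. f a \<le> r} \<union> {a\<in>A. Suc r \<le> f a} = A"
      by auto
    moreover have "card ({a\<in>A. f a \<le> r} \<union> {a\<in>A. Suc r \<le> f a}) = card {a\<in>A. f a \<le> r} + bad"
      unfolding bad_def by (rule card_Un_disjoint) (use A in auto)
    ultimately show ?thesis
      by simp
  qed
  ultimately show ?thesis
    unfolding r_def by linarith
qed

lemma many_sets_with_few_errors:
  fixes P :: "'e set \<Rightarrow> 'e \<Rightarrow> bool"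
  assumes M: "finite M" and most: "2 * card (Pow M \<times> M) \<le> 3 * card {(F, e) \<in> Pow M \<times> M. P F e}"
  shows "2 ^ card M \<le> 9 * card {F\<in>Pow M. card {e\<in>M. \<not> P F e} \<le> 3 * card M div 8}"
proof -
  define err where "err F = {e\<in>M. \<not> P F e}" for F
  define Agree where "Agree = {(F, e) \<in> Pow M \<times> M. P F e}"
  have "card Agree + (\<Sum>F\<in>Pow M. card (err F)) = card (Pow M \<times> M)"
  proof -
    have fin: "finite (Pow M \<times> M)" and sub: "Agree \<subseteq> Pow M \<times> M"
      using M unfolding Agree_def by auto
    have "(\<Sum>F\<in>Pow M. card (err F)) = card (SIGMA F:Pow M. err F)"
      using M by (simp add: card_SigmaI err_def)
    also have "(SIGMA F:Pow M. err F) = Pow M \<times> M - Agree"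
      unfolding err_def Agree_def by auto
    also have "card (Pow M \<times> M - Agree) = card (Pow M \<times> M) - card Agree"
      using fin sub by (simp add: card_Diff_subset finite_subset)
    finally show ?thesis
      using card_mono[OF fin sub] by simp
  qed
  then have "3 * (\<Sum>F\<in>Pow M. card (err F)) \<le> card (Pow M) * card M"
    using most M unfolding Agree_def by (simp add: card_cartesian_product)
  then have "card (Pow M) \<le> 9 * card {F\<in>Pow M. card (err F) \<le> 3 * card M div 8}"
    using M by (intro markov_card_bound) simp_all
  then show ?thesis
    using M unfolding err_def by (simp add: card_Pow)
qed

lemma few_sets_with_few_errors:
  fixes enc :: "'e set \<Rightarrow> nat" and dec :: "nat \<Rightarrow> 'e \<Rightarrow> bool"
  assumes M: "finite M" and enc: "\<And>F. F \<subseteq> M \<Longrightarrow> enc F < 2 ^ s"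
  shows "card {F\<in>Pow M. card {e\<in>M. dec (enc F) e \<noteq> (e \<in> F)} \<le> r} \<le> 2 ^ s * (\<Sum>k\<le>r. card M choose k)"
proof -
  define err where "err F = {e\<in>M. dec (enc F) e \<noteq> (e \<in> F)}" for F
  define Good where "Good = {F\<in>Pow M. card (err F) \<le> r}"
  have "inj_on (\<lambda>F. (enc F, err F)) Good"
  proof (rule inj_onI)
    fix F F' assume "F \<in> Good" "F' \<in> Good" and eq: "(enc F, err F) = (enc F', err F')"
    then have "F \<subseteq> M" "F' \<subseteq> M"
      unfolding Good_def by auto
    moreover have "e \<in> F \<longleftrightarrow> e \<in> F'" if "e \<in> M" for e
      using eq that unfolding err_def by (simp add: set_eq_iff) metis
    ultimately show "F = F'"
      by blast
  qed
  moreover have "(\<lambda>F. (enc F, err F)) ` Good \<subseteq> {..<2 ^ s} \<times> {D. D \<subseteq> M \<and> card D \<le> r}"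
    unfolding Good_def err_def using enc by auto
  ultimately have "card Good \<le> card ({..<(2::nat) ^ s} \<times> {D. D \<subseteq> M \<and> card D \<le> r})"
    by (rule card_inj_on_le) (use M in simp)
  also have "\<dots> \<le> 2 ^ s * (\<Sum>k\<le>r. card M choose k)"
    using card_subsets_card_le[OF M, of r] by (simp add: card_cartesian_product)
  finally show ?thesis
    unfolding Good_def err_def .
qed

text \<open>The INDEX problem: Alice encodes a subset F of M into s bits, and Bob, knowing only the
  code and an element e of M, has to decide whether e \<in> F. If he is right on two thirds of
  all pairs (F, e), then on at least a ninth of the sets F he errs on at most 3/8 of the
  elements. Such an F is determined by its code together with its set of errors, so these
  sets number at most 2^s times a Hamming ball of radius 3|M|/8.\<close>
lemma index_lower_bound:
  fixes M :: "'e set" and enc :: "'e set \<Rightarrow> nat" and dec :: "nat \<Rightarrow> 'e \<Rightarrow> bool"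
  assumes M: "finite M" and enc: "\<And>F. F \<subseteq> M \<Longrightarrow> enc F < 2 ^ s"
    and correct: "2 * card (Pow M \<times> M) \<le> 3 * card {(F, e) \<in> Pow M \<times> M. dec (enc F) e = (e \<in> F)}"
  shows "(2::nat) ^ (13 * card M) \<le> 9 ^ 8 * 2 ^ (8 * s) * 3 ^ (8 * card M)"
proof -
  define m where "m = card M"
  define r where "r = 3 * m div 8"
  have "2 ^ m * 2 ^ (m - r) \<le> 9 * (2 ^ s * (\<Sum>k\<le>r. m choose k)) * 2 ^ (m - r)"
    using many_sets_with_few_errors[OF M correct] few_sets_with_few_errors[where enc = enc and dec = dec and r = r, OF M enc]
    unfolding m_def r_def by simp
  also have "\<dots> \<le> 9 * 2 ^ s * 3 ^ m"
    using sum_binomial_times_power_two_le[of r m] unfolding r_def by (simp add: mult.assoc)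
  finally have main: "2 ^ (m + (m - r)) \<le> 9 * 2 ^ s * (3::nat) ^ m"
    by (simp add: power_add)
  have "(2::nat) ^ (13 * m) \<le> 2 ^ (8 * (m + (m - r)))"
    unfolding r_def by (intro power_increasing) auto
  also have "\<dots> = (2 ^ (m + (m - r))) ^ 8"
    by (metis power_mult mult.commute)
  also have "\<dots> \<le> (9 * 2 ^ s * 3 ^ m) ^ 8"
    using main by (rule power_mono) simp
  also have "\<dots> = 9 ^ 8 * 2 ^ (8 * s) * 3 ^ (8 * m)"
    by (simp add: power_mult_distrib power_mult mult.commute)
  finally show ?thesis
    unfolding m_def .
qed

lemma index_lower_bound_linear:
  assumes "2 ^ (13 * m) \<le> (9::nat) ^ 8 * 2 ^ (8 * s) * 3 ^ (8 * m)"
  shows "real m * (13 * ln 2 - 8 * ln 3) \<le> 8 * ln 2 * real s + 8 * ln 9"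
proof -
  have "(2::real) ^ (13 * m) \<le> 9 ^ 8 * 2 ^ (8 * s) * 3 ^ (8 * m)"
    using assms by (metis (mono_tags, lifting) of_nat_le_iff of_nat_mult of_nat_numeral of_nat_power)
  then have "ln ((2::real) ^ (13 * m)) \<le> ln (9 ^ 8 * 2 ^ (8 * s) * 3 ^ (8 * m))"
    by simp
  then show ?thesis
    using ln_realpow[of 9 8] by (simp add: ln_mult ln_realpow algebra_simps)
qed

section \<open>Reduction from INDEX\<close>

definition level_order :: "nat \<Rightarrow> nat \<Rightarrow> nat \<Rightarrow> (nat \<Rightarrow> nat) \<Rightarrow> nat list" where
  "level_order n u v lev = u # sort_key lev (filter (\<lambda>x. x \<noteq> u \<and> x \<noteq> v) [0..<n]) @ [v]"

lemma level_order:
  assumes "u < n" "v < n" "u \<noteq> v" "lev u = 0" "\<And>x. lev x \<le> lev v"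
  defines "ys \<equiv> level_order n u v lev"
  shows "vertex_enum n ys" "ys ! 0 = u" "ys ! (n - 1) = v" "sorted (map lev ys)"
proof -
  define mid where "mid = sort_key lev (filter (\<lambda>x. x \<noteq> u \<and> x \<noteq> v) [0..<n])"
  have ys: "ys = u # mid @ [v]"
    unfolding ys_def level_order_def mid_def by simp
  have mid: "distinct mid" "set mid = {..<n} - {u, v}" "sorted (map lev mid)"
    unfolding mid_def by (auto simp: distinct_sort)
  show enum: "vertex_enum n ys"
    by unfold_locales (use ys mid assms(1-3) in auto)
  show "ys ! 0 = u"
    using ys by simp
  have "length (u # mid) = n - 1"
    using vertex_enum.length_ys[OF enum] ys by simp
  then show "ys ! (n - 1) = v"
    using ys by (metis append_Cons nth_append_length)
  show "sorted (map lev ys)"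
    using ys mid(3) assms(4,5) by (auto simp: sorted_append)
qed

definition tap_approx :: "nat \<Rightarrow> nat \<Rightarrow> stream_alg pmf \<Rightarrow> bool" where
  "tap_approx n K P \<longleftrightarrow> (\<forall>E L xs. tap_instance n E L \<and> tap_feasible n E L L \<and> is_stream E L xs \<longrightarrow>
     2 / 3 \<le> measure_pmf.prob P {A. tap_opt n E L \<le> run_alg A xs \<and> run_alg A xs < K * tap_opt n E L})"

lemma is_stream_append:
  assumes "distinct ls" "set ls = LinkE ` L" "distinct ts" "set ts = TreeE ` E"
  shows "is_stream E L (ls @ ts)"
  unfolding is_stream_def using assms by auto

lemma fold_space_bounded:
  assumes "space_bounded s (q0, step, out)"
  shows "fold step xs q0 < 2 ^ s"
proof -
  have "fold step xs q < 2 ^ s" if "q < 2 ^ s" for q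
    using that assms by (induction xs arbitrary: q) (auto simp: space_bounded_def)
  then show ?thesis
    using assms by (simp add: space_bounded_def)
qed

text \<open>Alice holds a set F \<subseteq> M of links and Bob a link e \<in> M. Their joint instance has the
  links F \<union> T and, as tree, the Hamiltonian path tree e from Min e to Max e, along which the
  level lev e, capped at K, increases.\<close>
locale hard_family =
  fixes n K :: nat and M T :: "nat set set" and lev :: "nat set \<Rightarrow> nat \<Rightarrow> nat"
  assumes disjoint: "M \<inter> T = {}" and M_vpairs: "M \<subseteq> vpairs n" and T_vpairs: "T \<subseteq> vpairs n"
    and T_connected: "connected_on {..<n} (LinkE ` T)"
    and lev_Min: "e \<in> M \<Longrightarrow> lev e (Min e) = 0"
    and lev_Max: "e \<in> M \<Longrightarrow> K \<le> lev e (Max e)"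
    and lev_step: "e \<in> M \<Longrightarrow> {x, y} \<in> M \<union> T - {e} \<Longrightarrow> lev e x \<le> Suc (lev e y)"
begin

definition vertex_order :: "nat set \<Rightarrow> nat list" where
  "vertex_order e = level_order n (Min e) (Max e) (\<lambda>x. min (lev e x) K)"

definition tree :: "nat set \<Rightarrow> nat set set" where
  "tree e = path_edges (vertex_order e)"

lemma vertex_order:
  assumes "e \<in> M"
  shows "vertex_enum n (vertex_order e)" "vertex_order e ! 0 = Min e"
    "vertex_order e ! (n - 1) = Max e" "sorted (map (\<lambda>x. min (lev e x) K) (vertex_order e))"
  using level_order[of "Min e" n "Max e" "\<lambda>x. min (lev e x) K"] vpairs_Min_Max[of e n]
    assms M_vpairs lev_Min lev_Max
  unfolding vertex_order_def by auto

lemma finite_links: "F \<subseteq> M \<Longrightarrow> finite (F \<union> T)"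
  using M_vpairs T_vpairs finite_vpairs by (meson finite_Un finite_subset)

lemma instance_feasible:
  assumes "F \<subseteq> M" "e \<in> M"
  shows "tap_instance n (tree e) (F \<union> T)" "tap_feasible n (tree e) (F \<union> T) (F \<union> T)"
proof -
  interpret vertex_enum n "vertex_order e"
    using vertex_order(1)[OF assms(2)] .
  show "tap_instance n (tree e) (F \<union> T)"
    unfolding tap_instance_def tree_def
    using spanning_tree_path_edges assms(1) M_vpairs T_vpairs by auto
  show "tap_feasible n (tree e) (F \<union> T) (F \<union> T)"
    unfolding tap_feasible_def tree_def
    using two_edge_connectedI_tree_links[OF connected_path_edges T_connected] by blast
qed

lemma tap_opt_member:
  assumes "F \<subseteq> M" "e \<in> F"
  shows "tap_opt n (tree e) (F \<union> T) \<le> 1"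
proof -
  have "e \<in> M"
    using assms by blast
  interpret vertex_enum n "vertex_order e"
    using vertex_order(1)[OF \<open>e \<in> M\<close>] .
  have "e = {vertex_order e ! 0, vertex_order e ! (n - 1)}"
    using vertex_order(2,3)[OF \<open>e \<in> M\<close>] vpairs_Min_Max[of e n] \<open>e \<in> M\<close> M_vpairs by auto
  then have "tap_feasible n (tree e) (F \<union> T) {e}"
    unfolding tap_feasible_def tree_def using two_edge_connected_closing_link assms(2) by simp
  then show ?thesis
    using tap_opt_le[OF finite_links[OF assms(1)]] by fastforce
qed

lemma tap_opt_nonmember:
  assumes "F \<subseteq> M" "e \<in> M" "e \<notin> F"
  shows "K \<le> tap_opt n (tree e) (F \<union> T)"
proof (rule tap_opt_geI[OF finite_links[OF assms(1)] instance_feasible(2)[OF assms(1,2)]])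
  interpret vertex_enum n "vertex_order e"
    using vertex_order(1)[OF assms(2)] .
  fix S assume "tap_feasible n (tree e) (F \<union> T) S"
  then have S: "S \<subseteq> F \<union> T" "two_edge_connected {..<n} (TreeE ` path_edges (vertex_order e) \<union> LinkE ` S)"
    unfolding tap_feasible_def tree_def by auto
  have "e \<notin> T"
    using disjoint assms(2) by blast
  then have "S \<subseteq> M \<union> T - {e}"
    using S(1) assms(1,3) by blast
  then have "min (lev e x) K \<le> Suc (min (lev e y) K)" if "{x, y} \<in> S" for x y
    using lev_step[OF assms(2)] that by fastforce
  moreover have "S \<subseteq> vpairs n" "finite S"
    using S(1) assms(1) M_vpairs T_vpairs finite_links[OF assms(1)] finite_subset by blast+
  ultimately show "K \<le> card S"
    using card_links_ge_level_gap[OF S(2)] vertex_order(2-4)[OF assms(2)] lev_Min[OF assms(2)]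
      lev_Max[OF assms(2)] by simp
qed

lemma approximation_decides_membership:
  assumes "F \<subseteq> M" "e \<in> M"
    and "tap_opt n (tree e) (F \<union> T) \<le> a" "a < K * tap_opt n (tree e) (F \<union> T)"
  shows "a < K \<longleftrightarrow> e \<in> F"
proof (cases "e \<in> F")
  case True
  have "K * tap_opt n (tree e) (F \<union> T) \<le> K"
    using mult_le_mono2[OF tap_opt_member[OF assms(1) True]] by (metis mult.right_neutral)
  then have "a < K"
    using assms(4) by linarith
  then show ?thesis
    using True by simp
next
  case False
  then show ?thesis
    using tap_opt_nonmember[OF assms(1,2)] assms(3) by simp
qed

text \<open>The state after the links is Alice's message; Bob runs the algorithm on the tree edges and
  answers e \<in> F iff the output is below K.\<close>
lemma space_lower_bound:
  assumes space: "\<forall>A\<in>set_pmf P. space_bounded s A" and approx: "tap_approx n K P"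
  shows "(2::nat) ^ (13 * card M) \<le> 9 ^ 8 * 2 ^ (8 * s) * 3 ^ (8 * card M)"
proof -
  define enum :: "item set \<Rightarrow> item list" where "enum I = (SOME xs. set xs = I \<and> distinct xs)" for I
  have enum: "set (enum I) = I \<and> distinct (enum I)" if "finite I" for I
    unfolding enum_def using finite_distinct_list[OF that] by (rule someI_ex)
  define links where "links F = enum (LinkE ` (F \<union> T))" for F
  define edges where "edges e = enum (TreeE ` tree e)" for e
  define good where "good A = (\<lambda>(F, e). tap_opt n (tree e) (F \<union> T) \<le> run_alg A (links F @ edges e)
    \<and> run_alg A (links F @ edges e) < K * tap_opt n (tree e) (F \<union> T))" for A
  have M: "finite M"
    using M_vpairs finite_vpairs finite_subset by blast
  have "finite (tree e)" for e
    unfolding tree_def path_edges_def by simp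
  then have "is_stream (tree e) (F \<union> T) (links F @ edges e)" if "F \<subseteq> M" for F e
    unfolding links_def edges_def
    using enum finite_links[OF that] by (intro is_stream_append) auto
  then have "2 / 3 \<le> measure_pmf.prob P {A. good A x}" if "x \<in> Pow M \<times> M" for x
    using that approx instance_feasible unfolding tap_approx_def good_def by auto
  then obtain A where "A \<in> set_pmf P" and A_good: "2 * card (Pow M \<times> M) \<le> 3 * card {x\<in>Pow M \<times> M. good A x}"
    using exists_outcome_good_on_two_thirds[of "Pow M \<times> M"] M by blast
  moreover obtain q0 step out where A: "A = (q0, step, out)"
    by (cases A) auto
  ultimately have "space_bounded s (q0, step, out)"
    using space by simp
  define enc where "enc F = fold step (links F) q0" for F
  define dec where "dec q e = (out (fold step (edges e) q) < K)" for q e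
  have "{x\<in>Pow M \<times> M. good A x} \<subseteq> {(F, e) \<in> Pow M \<times> M. dec (enc F) e = (e \<in> F)}"
    using approximation_decides_membership
    unfolding good_def A run_alg_def enc_def dec_def by auto
  then have "card {x\<in>Pow M \<times> M. good A x} \<le> card {(F, e) \<in> Pow M \<times> M. dec (enc F) e = (e \<in> F)}"
    by (rule card_mono[rotated]) (use M in \<open>auto intro: finite_subset[of _ "Pow M \<times> M"]\<close>)
  then show ?thesis
  proof (intro index_lower_bound[OF M, where enc = enc and dec = dec])
    show "enc F < 2 ^ s" for F
      unfolding enc_def by (rule fold_space_bounded) fact
  qed (use A_good in linarith)
qed

end

section \<open>Paths with chords\<close>

definition path_links :: "nat \<Rightarrow> nat set set" where
  "path_links n = (\<lambda>i. {i, Suc i}) ` {i. Suc i < n}"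

definition chords :: "nat \<Rightarrow> nat \<Rightarrow> nat set set" where
  "chords n K = (\<lambda>j. {K * j, K * Suc j}) ` {..<(n - 1) div K}"

lemma path_links_subset_vpairs: "path_links n \<subseteq> vpairs n"
proof
  fix e assume "e \<in> path_links n"
  then obtain i where "Suc i < n" "e = {i, Suc i}"
    unfolding path_links_def by auto
  then show "e \<in> vpairs n"
    unfolding vpairs_def by (intro CollectI exI[of _ i] exI[of _ "Suc i"]) auto
qed

lemma connected_path_links: "connected_on {..<n} (LinkE ` path_links n)"
proof (intro connected_onI_root rtranclp_adjacent_imp_adj)
  show "(adjacent (path_links n))\<^sup>*\<^sup>* 0 x" if "x \<in> {..<n}" for x
    using that
  proof (induction x)
    case (Suc x)
    then have "adjacent (path_links n) x (Suc x)"
      unfolding adjacent_def path_links_def by auto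
    then show ?case
      using Suc by (meson Suc_lessD lessThan_iff rtranclp.rtrancl_into_rtrancl)
  qed simp
qed

lemma chord_Min_Max:
  assumes "0 < K"
  shows "Min {K * j, K * Suc j} = K * j" "Max {K * j, K * Suc j} = K * Suc j"
  using assms by auto

lemma chords_subset_vpairs:
  assumes "0 < K"
  shows "chords n K \<subseteq> vpairs n"
proof
  fix e assume "e \<in> chords n K"
  then obtain j where j: "j < (n - 1) div K" "e = {K * j, K * Suc j}"
    unfolding chords_def by auto
  have "K * Suc j \<le> K * ((n - 1) div K)"
    using j(1) by (intro mult_le_mono2) simp
  also have "\<dots> \<le> n - 1"
    by simp
  finally have "K * j < n" "K * Suc j < n" "K * j \<noteq> K * Suc j"
    using assms by auto
  then show "e \<in> vpairs n"
    unfolding vpairs_def j(2) by blast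
qed

lemma card_chords:
  assumes "0 < K"
  shows "card (chords n K) = (n - 1) div K"
proof -
  have "inj_on (\<lambda>j. {K * j, K * Suc j}) {..<(n - 1) div K}"
    by (rule inj_onI) (metis assms chord_Min_Max(1) mult_cancel1 not_gr0)
  then show ?thesis
    unfolding chords_def by (simp add: card_image)
qed

lemma chords_disjoint_path_links:
  assumes "2 \<le> K"
  shows "chords n K \<inter> path_links n = {}"
proof (rule ccontr)
  assume "chords n K \<inter> path_links n \<noteq> {}"
  then obtain j i where "{K * j, K * Suc j} = {i, Suc i}"
    unfolding chords_def path_links_def by blast
  then have "Min {K * j, K * Suc j} = Min {i, Suc i}" "Max {K * j, K * Suc j} = Max {i, Suc i}"
    by simp_all
  then have "K * j = i" "K * Suc j = Suc i"
    using chord_Min_Max assms by auto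
  then show False
    using assms by simp
qed

text \<open>Measured from the chord e, the endpoints of any other chord lie both at or below
  Min e or both at or above Max e.\<close>
lemma chord_level_step:
  assumes K: "0 < K" and e: "e \<in> chords n K" and xy: "{x, y} \<in> chords n K \<union> path_links n - {e}"
  shows "min (x - Min e) K \<le> Suc (min (y - Min e) K)"
proof (cases "{x, y} \<in> path_links n")
  case True
  then obtain i where "{x, y} = {i, Suc i}"
    unfolding path_links_def by auto
  then show ?thesis
    by (auto simp: doubleton_eq_iff)
next
  case False
  obtain j where j: "e = {K * j, K * Suc j}"
    using e unfolding chords_def by auto
  obtain j' where j': "{x, y} = {K * j', K * Suc j'}" "j' \<noteq> j"
    using xy j False unfolding chords_def by auto
  then have "x \<le> K * Suc j'" "y \<le> K * Suc j'" "K * j' \<le> x" "K * j' \<le> y"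
    using K by (auto simp: doubleton_eq_iff)
  moreover have "K * Suc j' \<le> K * j \<or> K * Suc j \<le> K * j'"
    using j'(2) by (metis mult_le_mono2 not_less_eq_eq nat_neq_iff Suc_leI)
  ultimately show ?thesis
    unfolding j chord_Min_Max[OF K] by auto
qed

lemma path_chords_hard_family:
  assumes "2 \<le> K"
  shows "hard_family n K (chords n K) (path_links n) (\<lambda>e x. min (x - Min e) K)"
proof
  have K: "0 < K"
    using assms by simp
  show "chords n K \<inter> path_links n = {}"
    using chords_disjoint_path_links[OF assms] .
  show "chords n K \<subseteq> vpairs n" "path_links n \<subseteq> vpairs n"
    using chords_subset_vpairs[OF K] path_links_subset_vpairs .
  show "connected_on {..<n} (LinkE ` path_links n)"
    by (rule connected_path_links)
  fix e assume e: "e \<in> chords n K"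
  then obtain j where "e = {K * j, K * Suc j}"
    unfolding chords_def by auto
  then show "min (Min e - Min e) K = 0" "K \<le> min (Max e - Min e) K"
    using chord_Min_Max[OF K] by auto
  show "min (x - Min e) K \<le> Suc (min (y - Min e) K)"
    if "{x, y} \<in> chords n K \<union> path_links n - {e}" for x y
    using chord_level_step[OF K e that] .
qed

section \<open>Graphs of large girth\<close>

lemma girth_gt_empty: "girth_gt {} g"
  unfolding girth_gt_def has_cycle_of_length_def by (metis empty_iff less_le_trans numeral_less_iff
      semiring_norm(76) zero_less_numeral)

lemma finite_girth_gt_cards: "finite {card F | F. F \<subseteq> vpairs n \<and> girth_gt F g}"
  by (rule finite_subset[of _ "card ` Pow (vpairs n)"]) (auto simp: finite_vpairs)

lemma card_le_gamma: "F \<subseteq> vpairs n \<Longrightarrow> girth_gt F g \<Longrightarrow> card F \<le> gamma n g"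
  unfolding gamma_def by (rule Max_ge) (auto simp: finite_girth_gt_cards)

lemma gamma_attained:
  obtains H where "H \<subseteq> vpairs n" "girth_gt H g" "card H = gamma n g"
proof -
  have "{card F | F. F \<subseteq> vpairs n \<and> girth_gt F g} \<noteq> {}"
    using girth_gt_empty by blast
  then have "gamma n g \<in> {card F | F. F \<subseteq> vpairs n \<and> girth_gt F g}"
    unfolding gamma_def by (rule Max_in[OF finite_girth_gt_cards])
  then obtain H where "H \<subseteq> vpairs n" "girth_gt H g" "card H = gamma n g"
    by auto
  then show ?thesis
    by (rule that)
qed

lemma Suc_add_mod_neq:
  fixes k :: nat
  assumes "i < k" "Suc l < k"
  shows "(Suc i + l) mod k \<noteq> i"
proof (cases "Suc i + l < k")
  case False
  then have "(Suc i + l) mod k = Suc i + l - k"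
    using assms by (simp add: mod_if le_mod_geq)
  then show ?thesis
    using assms False by linarith
qed simp

lemma cycle_edge_inj:
  assumes "3 \<le> k" "length vs = k" "distinct vs" "i < k" "j < k"
    and "{vs ! j, vs ! (Suc j mod k)} = {vs ! i, vs ! (Suc i mod k)}"
  shows "j = i"
proof -
  have nth_eq: "a < k \<Longrightarrow> b < k \<Longrightarrow> vs ! a = vs ! b \<longleftrightarrow> a = b" for a b
    using assms(2,3) nth_eq_iff_index_eq by blast
  have "Suc i mod k < k" "Suc j mod k < k"
    using assms(1) by auto
  then have "j = i \<or> j = Suc i mod k \<and> Suc j mod k = i"
    using assms(4-6) nth_eq by (auto simp: doubleton_eq_iff)
  moreover have "Suc (Suc i mod k) mod k \<noteq> i"
    using assms(1,4) by (cases "Suc i < k") (auto simp: mod_if)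
  ultimately show ?thesis
    by auto
qed

text \<open>An edge joining two components cannot lie on a cycle.\<close>
lemma girth_gt_insert:
  assumes girth: "girth_gt H g" and disconnected: "\<not> (adjacent H)\<^sup>*\<^sup>* x y"
  shows "girth_gt (insert {x, y} H) g"
  unfolding girth_gt_def
proof (intro allI impI notI)
  fix k assume "k \<le> g" and "has_cycle_of_length (insert {x, y} H) k"
  then obtain vs where k: "3 \<le> k" and vs: "length vs = k" "distinct vs"
    and edge: "\<And>i. i < k \<Longrightarrow> {vs ! i, vs ! (Suc i mod k)} \<in> insert {x, y} H"
    unfolding has_cycle_of_length_def by auto
  have "\<not> has_cycle_of_length H k"
    using girth \<open>k \<le> g\<close> unfolding girth_gt_def by auto
  then obtain i where i: "i < k" "{vs ! i, vs ! (Suc i mod k)} \<notin> H"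
    unfolding has_cycle_of_length_def using k vs by auto
  then have new: "{vs ! i, vs ! (Suc i mod k)} = {x, y}"
    using edge by blast
  define w where "w l = vs ! ((Suc i + l) mod k)" for l
  have "(adjacent H)\<^sup>*\<^sup>* (w 0) (w l)" if "l < k" for l
    using that
  proof (induction l)
    case (Suc l)
    define j where "j = (Suc i + l) mod k"
    have "j < k" "j \<noteq> i"
      unfolding j_def using k Suc_add_mod_neq[OF i(1) Suc(2)] by auto
    then have "{vs ! j, vs ! (Suc j mod k)} \<in> H"
      using edge[of j] cycle_edge_inj[OF k vs i(1)] new by auto
    moreover have "Suc j mod k = (Suc i + Suc l) mod k"
      unfolding j_def by (simp add: mod_Suc_eq)
    ultimately have "adjacent H (w l) (w (Suc l))"
      unfolding adjacent_def w_def j_def by simp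
    then show ?case
      using Suc by (meson Suc_lessD rtranclp.rtrancl_into_rtrancl)
  qed simp
  from this[of "k - 1"] have "(adjacent H)\<^sup>*\<^sup>* (vs ! (Suc i mod k)) (vs ! i)"
    using k i unfolding w_def by simp
  moreover from this have "(adjacent H)\<^sup>*\<^sup>* (vs ! i) (vs ! (Suc i mod k))"
    by (rule rtranclp_adjacent_sym)
  ultimately show False
    using new disconnected by (auto simp: doubleton_eq_iff)
qed

lemma girth_maximal_connected:
  assumes H: "H \<subseteq> vpairs n" "girth_gt H g"
    and maximal: "\<And>F. F \<subseteq> vpairs n \<Longrightarrow> girth_gt F g \<Longrightarrow> card F \<le> card H"
    and "x < n" "y < n"
  shows "(adjacent H)\<^sup>*\<^sup>* x y"
proof (rule ccontr)
  assume disconnected: "\<not> (adjacent H)\<^sup>*\<^sup>* x y"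
  then have "x \<noteq> y" "{x, y} \<notin> H"
    unfolding adjacent_def by auto
  then have "insert {x, y} H \<subseteq> vpairs n"
    using H(1) \<open>x < n\<close> \<open>y < n\<close> unfolding vpairs_def by blast
  moreover have "girth_gt (insert {x, y} H) g"
    by (rule girth_gt_insert[OF H(2) disconnected])
  ultimately have "card (insert {x, y} H) \<le> card H"
    by (rule maximal)
  moreover have "card (insert {x, y} H) = Suc (card H)"
    using \<open>{x, y} \<notin> H\<close> H(1) finite_vpairs finite_subset by (metis card_insert_disjoint)
  ultimately show False
    by simp
qed

definition hop_dist :: "('a \<Rightarrow> 'a \<Rightarrow> bool) \<Rightarrow> 'a \<Rightarrow> 'a \<Rightarrow> nat" where
  "hop_dist R u x = (LEAST d. (R ^^ d) u x)"

lemma relpowp_hop_dist: "R\<^sup>*\<^sup>* u x \<Longrightarrow> (R ^^ hop_dist R u x) u x"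
  unfolding hop_dist_def by (rule LeastI_ex) (rule rtranclp_imp_relpowp)

lemma hop_dist_predecessor:
  assumes "R\<^sup>*\<^sup>* u x" "x \<noteq> u"
  obtains p where "R p x" "hop_dist R u p < hop_dist R u x"
proof -
  obtain d where d: "hop_dist R u x = Suc d"
    using relpowp_hop_dist[OF assms(1)] assms(2) by (cases "hop_dist R u x") auto
  then obtain p where "(R ^^ d) u p" "R p x"
    using relpowp_hop_dist[OF assms(1)] by (metis relpowp_Suc_E)
  moreover from this have "hop_dist R u p \<le> d"
    unfolding hop_dist_def by (intro Least_le)
  ultimately show ?thesis
    using that d by auto
qed

text \<open>Breadth-first search: joining each vertex other than the root to a neighbour closer to
  the root gives a spanning tree.\<close>
lemma connected_spanning_subtree:
  assumes H: "H \<subseteq> vpairs n" and "0 < n" and connected: "\<And>x. x < n \<Longrightarrow> (adjacent H)\<^sup>*\<^sup>* 0 x"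
  obtains T where "T \<subseteq> H" "card T \<le> n - 1" "connected_on {..<n} (LinkE ` T)"
proof -
  define dist where "dist = hop_dist (adjacent H) 0"
  have "\<exists>p. adjacent H p x \<and> dist p < dist x" if "x < n" "x \<noteq> 0" for x
    using hop_dist_predecessor[OF connected[OF that(1)] that(2)] unfolding dist_def by blast
  then obtain parent where parent: "\<And>x. x < n \<Longrightarrow> x \<noteq> 0 \<Longrightarrow> adjacent H (parent x) x \<and> dist (parent x) < dist x"
    by metis
  have parent_less: "parent x < n" if "x < n" "x \<noteq> 0" for x
    using parent[OF that] H unfolding adjacent_def vpairs_def by (auto simp: doubleton_eq_iff)
  define T where "T = (\<lambda>x. {parent x, x}) ` {1..<n}"
  have "(adjacent T)\<^sup>*\<^sup>* 0 x" if "x < n" for x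
    using that
  proof (induction "dist x" arbitrary: x rule: less_induct)
    case less
    show ?case
    proof (cases "x = 0")
      case False
      have "(adjacent T)\<^sup>*\<^sup>* 0 (parent x)"
        using less parent parent_less False by blast
      moreover have "adjacent T (parent x) x"
        unfolding adjacent_def T_def using less(2) False by force
      ultimately show ?thesis
        by (rule rtranclp.rtrancl_into_rtrancl)
    qed simp
  qed
  then have "connected_on {..<n} (LinkE ` T)"
    by (intro connected_onI_root rtranclp_adjacent_imp_adj) simp
  moreover have "T \<subseteq> H"
    unfolding T_def using parent unfolding adjacent_def by auto
  moreover have "card T \<le> n - 1"
    unfolding T_def using card_image_le[of "{1..<n}" "\<lambda>x. {parent x, x}"] by simp
  ultimately show ?thesis
    using that by blast
qed

definition capped_dist :: "('a \<Rightarrow> 'a \<Rightarrow> bool) \<Rightarrow> nat \<Rightarrow> 'a \<Rightarrow> 'a \<Rightarrow> nat" where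
  "capped_dist R K u x = (LEAST d. d = K \<or> (R ^^ d) u x)"

lemma capped_dist_le: "capped_dist R K u x \<le> K"
  unfolding capped_dist_def by (rule Least_le) simp

lemma capped_dist_self: "capped_dist R K u u = 0"
  unfolding capped_dist_def by (rule Least_eq_0) simp

lemma capped_dist_less_imp_relpowp:
  "capped_dist R K u x < K \<Longrightarrow> (R ^^ capped_dist R K u x) u x"
  using LeastI[of "\<lambda>d. d = K \<or> (R ^^ d) u x" K] unfolding capped_dist_def by auto

lemma capped_dist_step:
  assumes "R y x"
  shows "capped_dist R K u x \<le> Suc (capped_dist R K u y)"
proof (cases "capped_dist R K u y < K")
  case True
  then have "(R ^^ Suc (capped_dist R K u y)) u x"
    using capped_dist_less_imp_relpowp assms by (metis relpowp_Suc_I)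
  then show ?thesis
    unfolding capped_dist_def by (intro Least_le) simp
next
  case False
  then show ?thesis
    using capped_dist_le[of R K u x] by simp
qed

lemma relpowp_imp_rtrancl_path:
  "(R ^^ d) u x \<Longrightarrow> \<exists>xs. rtrancl_path R u xs x \<and> length xs = d"
proof (induction d arbitrary: x)
  case (Suc d)
  then obtain y xs where "rtrancl_path R u xs y" "length xs = d" "R y x"
    by (metis relpowp_Suc_E)
  then have "rtrancl_path R u (xs @ [x]) x" "length (xs @ [x]) = Suc d"
    by (auto intro: rtrancl_path_trans rtrancl_path.intros)
  then show ?case
    by blast
qed (auto intro: rtrancl_path.base)

lemma cycle_of_path_and_edge:
  assumes path: "rtrancl_path (adjacent H) u xs v" "distinct (u # xs)" "2 \<le> length xs"
    and edge: "{u, v} \<in> H"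
  shows "has_cycle_of_length H (Suc (length xs))"
proof -
  define k where "k = Suc (length xs)"
  define vs where "vs = u # xs"
  have "xs \<noteq> []"
    using path(3) by auto
  then have last: "vs ! length xs = v"
    unfolding vs_def using rtrancl_path_last[OF path(1)] by (simp add: last_conv_nth nth_Cons')
  have "{vs ! i, vs ! (Suc i mod k)} \<in> H" if "i < k" for i
  proof (cases "Suc i < k")
    case True
    then show ?thesis
      using rtrancl_path_nth[OF path(1), of i] unfolding vs_def k_def adjacent_def by simp
  next
    case False
    then have "i = length xs"
      using that unfolding k_def by simp
    moreover from this have "Suc i mod k = 0"
      unfolding k_def by simp
    ultimately show ?thesis
      using last edge unfolding vs_def by (simp add: insert_commute)
  qed
  then show ?thesis
    unfolding has_cycle_of_length_def k_def[symmetric]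
    using path(2,3) unfolding vs_def k_def by (intro conjI exI[of _ "u # xs"]) auto
qed

text \<open>A shorter path from u to v avoiding e would close a cycle of length at most K with e.\<close>
lemma capped_dist_ge_girth:
  assumes girth: "girth_gt H K" and e: "e \<in> H" "e = {u, v}" "u \<noteq> v"
  shows "K \<le> capped_dist (adjacent (H - {e})) K u v"
proof (rule ccontr)
  assume "\<not> K \<le> capped_dist (adjacent (H - {e})) K u v"
  then obtain xs where xs: "rtrancl_path (adjacent (H - {e})) u xs v" "length xs < K"
    using capped_dist_less_imp_relpowp relpowp_imp_rtrancl_path by (metis not_le)
  obtain ys where ys: "rtrancl_path (adjacent (H - {e})) u ys v" "distinct (u # ys)" "set ys \<subseteq> set xs"
    using rtrancl_path_distinct[OF xs(1)] by blast
  have "length ys \<le> length xs"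
    using ys(2,3) by (metis card_length card_mono distinct.simps(2) distinct_card le_trans List.finite_set)
  have "length ys \<noteq> 0"
    using ys(1) e(3) by (auto elim: rtrancl_path.cases)
  moreover have "length ys \<noteq> 1"
  proof
    assume "length ys = 1"
    then have "ys = [v]"
      using rtrancl_path_last[OF ys(1)] by (cases ys) auto
    then show False
      using ys(1) e(2) by (auto elim!: rtrancl_path.cases simp: adjacent_def)
  qed
  moreover have "rtrancl_path (adjacent H) u ys v"
    using ys(1) by (rule rtrancl_path_mono) (auto simp: adjacent_def)
  ultimately have "has_cycle_of_length H (Suc (length ys))"
    using cycle_of_path_and_edge ys(2) e by (metis One_nat_def Suc_1 less_2_cases not_le)
  then show False
    using girth \<open>length ys \<le> length xs\<close> xs(2) unfolding girth_gt_def by auto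
qed

lemma girth_hard_family:
  assumes H: "H \<subseteq> vpairs n" "girth_gt H K" and T: "T \<subseteq> H" "connected_on {..<n} (LinkE ` T)"
  shows "hard_family n K (H - T) T (\<lambda>e. capped_dist (adjacent (H - {e})) K (Min e))"
proof
  show "(H - T) \<inter> T = {}" "H - T \<subseteq> vpairs n" "T \<subseteq> vpairs n"
    using H(1) T(1) by auto
  show "connected_on {..<n} (LinkE ` T)"
    by (fact T(2))
  fix e assume "e \<in> H - T"
  then have "e \<in> H" "e \<in> vpairs n"
    using H(1) by auto
  show "capped_dist (adjacent (H - {e})) K (Min e) (Min e) = 0"
    by (rule capped_dist_self)
  show "K \<le> capped_dist (adjacent (H - {e})) K (Min e) (Max e)"
    using capped_dist_ge_girth[OF H(2) \<open>e \<in> H\<close> vpairs_Min_Max(1)[OF \<open>e \<in> vpairs n\<close>]]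
      vpairs_Min_Max(2)[OF \<open>e \<in> vpairs n\<close>] by simp
  fix x y assume "{x, y} \<in> H - T \<union> T - {e}"
  then have "adjacent (H - {e}) y x"
    using T(1) unfolding adjacent_def by (auto simp: insert_commute)
  then show "capped_dist (adjacent (H - {e})) K (Min e) x \<le> Suc (capped_dist (adjacent (H - {e})) K (Min e) y)"
    by (rule capped_dist_step)
qed

section \<open>Space bounds\<close>

lemma index_rate_pos: "0 < 13 * ln 2 - 8 * ln (3::real)"
proof -
  have "ln (6561::real) < ln 8192"
    by simp
  moreover have "ln (6561::real) = 8 * ln 3" "ln (8192::real) = 13 * ln 2"
    using ln_realpow[of 3 8] ln_realpow[of 2 13] by simp_all
  ultimately show ?thesis
    by linarith
qed

lemma space_bound_girth:
  assumes "0 < n" and space: "\<forall>A\<in>set_pmf P. space_bounded s A" and approx: "tap_approx n K P"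
  shows "(real (gamma n K) - real n) * (13 * ln 2 - 8 * ln 3) \<le> 8 * ln 2 * real s + 8 * ln 9"
proof -
  obtain H where H: "H \<subseteq> vpairs n" "girth_gt H K" "card H = gamma n K"
    by (rule gamma_attained)
  have "(adjacent H)\<^sup>*\<^sup>* 0 x" if "x < n" for x
    using girth_maximal_connected[OF H(1,2) _ \<open>0 < n\<close> that] card_le_gamma H(3) by metis
  then obtain T where T: "T \<subseteq> H" "card T \<le> n - 1" "connected_on {..<n} (LinkE ` T)"
    by (rule connected_spanning_subtree[OF H(1) \<open>0 < n\<close>])
  interpret hard_family n K "H - T" T "\<lambda>e. capped_dist (adjacent (H - {e})) K (Min e)"
    using girth_hard_family[OF H(1,2) T(1,3)] .
  have "finite H"
    using H(1) finite_vpairs finite_subset by blast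
  then have "card (H - T) = card H - card T"
    using T(1) by (simp add: card_Diff_subset finite_subset)
  then have "gamma n K \<le> card (H - T) + n"
    using H(3) T(2) by linarith
  then have "real (gamma n K) - real n \<le> real (card (H - T))"
    by linarith
  then have "(real (gamma n K) - real n) * (13 * ln 2 - 8 * ln 3)
      \<le> real (card (H - T)) * (13 * ln 2 - 8 * ln 3)"
    using index_rate_pos by (simp add: mult_right_mono)
  also have "\<dots> \<le> 8 * ln 2 * real s + 8 * ln 9"
    by (rule index_lower_bound_linear[OF space_lower_bound[OF space approx]])
  finally show ?thesis .
qed

lemma space_bound_path:
  assumes K: "2 \<le> K" and space: "\<forall>A\<in>set_pmf P. space_bounded s A" and approx: "tap_approx n K P"
  shows "(real n - real K) * (13 * ln 2 - 8 * ln 3) \<le> real K * (8 * ln 2 * real s + 8 * ln 9)"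
proof -
  define m where "m = (n - 1) div K"
  obtain M T lev where "hard_family n K M T lev" "card M = m"
    using path_chords_hard_family[OF K] card_chords[of K n] K unfolding m_def by fastforce
  then have bound: "real m * (13 * ln 2 - 8 * ln 3) \<le> 8 * ln 2 * real s + 8 * ln 9"
    using index_lower_bound_linear[OF hard_family.space_lower_bound[OF _ space approx]] by blast
  have "n - 1 = m * K + (n - 1) mod K"
    unfolding m_def by simp
  moreover have "(n - 1) mod K < K"
    using K by simp
  ultimately have "n \<le> m * K + K"
    by linarith
  then have "real n \<le> real (m * K + K)"
    by (rule of_nat_mono)
  then have "real n - real K \<le> real m * real K"
    by simp
  then have "(real n - real K) * (13 * ln 2 - 8 * ln 3) \<le> real m * real K * (13 * ln 2 - 8 * ln 3)"
    using index_rate_pos by (simp add: mult_right_mono)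
  also have "\<dots> = real K * (real m * (13 * ln 2 - 8 * ln 3))"
    by simp
  also have "\<dots> \<le> real K * (8 * ln 2 * real s + 8 * ln 9)"
    using bound by (simp add: mult_left_mono)
  finally show ?thesis .
qed

text \<open>If gamma is at least 2n, the girth bound alone is linear in gamma; otherwise gamma is
  linear in n, and so is the path bound.\<close>
lemma two_regimes_bound:
  fixes a b K S g n :: real
  assumes pos: "0 < a" "0 \<le> b" "1 \<le> K"
    and girth: "(g - n) * a \<le> S + b" and path: "(n - K) * a \<le> K * (S + b)"
    and large: "2 * K * (a + b) + 2 * b \<le> a * n"
  shows "a * g \<le> 4 * K * S"
proof -
  have girth': "a * g - a * n \<le> S + b" and path': "a * n - K * a \<le> K * S + K * b"
    and large': "2 * (K * a) + 2 * (K * b) + 2 * b \<le> a * n"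
    using girth path large by (simp_all add: algebra_simps)
  have "0 \<le> K * a" "0 \<le> K * b"
    using pos by simp_all
  show ?thesis
  proof (cases "2 * n \<le> g")
    case True
    then have "a * (2 * n) \<le> a * g"
      using pos(1) by (intro mult_left_mono) auto
    then have "a * g \<le> 4 * S" "0 \<le> S"
      using girth' large' \<open>0 \<le> K * a\<close> \<open>0 \<le> K * b\<close> pos(2) by (simp_all add: algebra_simps)
    moreover have "S \<le> K * S"
      using mult_right_mono[OF pos(3) \<open>0 \<le> S\<close>] by simp
    ultimately show ?thesis
      by (simp add: mult.assoc)
  next
    case False
    then have "a * g \<le> a * (2 * n)"
      using pos(1) by (intro mult_left_mono) auto
    then show ?thesis
      using path' large' pos(2) by (simp add: algebra_simps)
  qed
qed

lemma space_ge_gamma: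
  fixes n K s :: nat
  defines "a \<equiv> 13 * ln 2 - 8 * ln (3::real)" and "b \<equiv> 8 * ln (9::real)"
  assumes K: "2 \<le> K" and large: "(2 * real K * (a + b) + 2 * b) / a \<le> real n"
    and space: "\<forall>A\<in>set_pmf P. space_bounded s A" and approx: "tap_approx n K P"
  shows "a * real (gamma n K) \<le> 4 * real K * (8 * ln 2 * real s)"
proof -
  have a: "0 < a"
    unfolding a_def by (rule index_rate_pos)
  have b: "0 \<le> b"
    unfolding b_def by simp
  have large': "2 * real K * (a + b) + 2 * b \<le> a * real n"
    using large a by (simp add: pos_divide_le_eq mult.commute)
  moreover have "0 < 2 * real K * (a + b) + 2 * b"
    using a b K by (simp add: add_pos_nonneg)
  ultimately have "0 < a * real n"
    by linarith
  then have "0 < n"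
    using a by (simp add: zero_less_mult_iff)
  show ?thesis
  proof (rule two_regimes_bound[OF a b _ _ _ large'])
    show "(real (gamma n K) - real n) * a \<le> 8 * ln 2 * real s + b"
      using space_bound_girth[OF \<open>0 < n\<close> space approx] unfolding a_def b_def .
    show "(real n - real K) * a \<le> real K * (8 * ln 2 * real s + b)"
      using space_bound_path[OF K space approx] unfolding a_def b_def .
  qed (use K in simp)
qed

theorem mainTheorem8:
  fixes t :: nat
  assumes "t \<ge> 1"
  shows "\<exists>c::real. c > 0 \<and> (\<exists>N. \<forall>n\<ge>N. \<forall>(s::nat) (P::stream_alg pmf).
     ((\<forall>A\<in>set_pmf P. space_bounded s A) \<and>
      (\<forall>E L xs. tap_instance n E L \<and> tap_feasible n E L L \<and> is_stream E L xs \<longrightarrow>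
         measure_pmf.prob P {A. tap_opt n E L \<le> run_alg A xs \<and>
                                 run_alg A xs < (2 * t + 1) * tap_opt n E L} \<ge> 2 / 3))
     \<longrightarrow> real s \<ge> c * real (gamma n (2 * t + 1)))"
proof -
  define K where "K = 2 * t + 1"
  define a where "a = 13 * ln 2 - 8 * ln (3::real)"
  define b where "b = 8 * ln (9::real)"
  define c where "c = a / (4 * real K * (8 * ln 2))"
  define N where "N = nat \<lceil>(2 * real K * (a + b) + 2 * b) / a\<rceil>"
  have K: "2 \<le> K"
    unfolding K_def using assms by simp
  have "c * real (gamma n K) \<le> real s"
    if "N \<le> n" "\<forall>A\<in>set_pmf P. space_bounded s A" "tap_approx n K P" for n s P
  proof -
    have "real N \<le> real n"
      using that(1) by simp
    then have "(2 * real K * (a + b) + 2 * b) / a \<le> real n"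
      using real_nat_ceiling_ge[of "(2 * real K * (a + b) + 2 * b) / a"] unfolding N_def by linarith
    then have "a * real (gamma n K) \<le> 4 * real K * (8 * ln 2 * real s)"
      using space_ge_gamma[OF K _ that(2,3)] unfolding a_def b_def by blast
    then show ?thesis
      unfolding c_def using K by (simp add: field_simps)
  qed
  moreover have "0 < c"
    unfolding c_def a_def using index_rate_pos K by simp
  ultimately show ?thesis
    unfolding tap_approx_def K_def by blast
qed

end
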